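(* Let $V\subset\mathbb N$ be finite, $l\in\mathbb N$, and let $G_{\mathbf i}\in\mathcal C_{V,2l}$ have a balanced leaf $v_j$. Let $\widetilde G$ be the version of $G_{\mathbf i}$ with $v_j$ removed. Then $B(G_{\mathbf i})\setminus\{v_j\}=B(\widetilde G)$.
   Context: For a finite $V\subset\mathbb N$ and $N\ge1$, a route through $V$ of length $N$ is a sequence $\mathbf i=(i_1,\dots,i_N)\in V^N$ whose set of entries equals $V$; its circuit multigraph $G_{\mathbf i}$ has vertex set $V$ and edges $1,\dots,N$, edge $k<N$ from $i_k$ to $i_{k+1}$, edge $N$ from $i_N$ to $i_1$; $\mathcal C_{V,N}$ is the set of these. The black vertices are $B(G_{\mathbf i})=\{i_t:t\text{ odd}\}$. Balanced leaf (only when $N>2$): a vertex $v$ occurring exactly once in $\mathbf i$, say $i_t=v$, whose cyclic neighbours $i_{t-1},i_{t+1}$ (indices mod $N$) are equal. The version with $v=i_t$ removed is $G_{\mathbf i'}$, where $\mathbf i'$ is obtained from $\mathbf i$ by deleting the entries at positions $t,t+1$ if $t<N$, and at positions $N-1,N$ if $t=N$; it is a route through $V\setminus\{v\}$ of length $N-2$. *)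

theory Defs
  imports Main
begin

text \<open>Sequences (i_1,...,i_N) are lists; list index k corresponds to position t = k+1.
  The circuit multigraph G_i is determined by the sequence i, so we work with i directly.\<close>

definition route :: "nat set \<Rightarrow> nat \<Rightarrow> nat list \<Rightarrow> bool" where
  "route V N i \<longleftrightarrow> N \<ge> 1 \<and> length i = N \<and> set i = V"

text \<open>Black vertices: entries i_t with t odd, i.e. list indices k = t-1 even.\<close>
definition black :: "nat list \<Rightarrow> nat set" where
  "black i = {i ! k | k. k < length i \<and> even k}"

definition balanced_leaf_at :: "nat list \<Rightarrow> nat \<Rightarrow> bool" where
  "balanced_leaf_at i k \<longleftrightarrow> length i > 2 \<and> k < length i \<and> count_list i (i ! k) = 1 \<and>
     i ! ((k + length i - 1) mod length i) = i ! ((k + 1) mod length i)"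

definition balanced_leaf :: "nat list \<Rightarrow> nat \<Rightarrow> bool" where
  "balanced_leaf i v \<longleftrightarrow> (\<exists>k<length i. i ! k = v \<and> balanced_leaf_at i k)"

definition remove_leaf :: "nat list \<Rightarrow> nat \<Rightarrow> nat list" where
  "remove_leaf i k = (if k + 1 < length i then take k i @ drop (k + 2) i
                      else take (length i - 2) i)"

end

theory Submission
  imports Defs
begin

text \<open>Deleting two consecutive entries shifts every later entry by two places, so the
  surviving entries keep the parity of their position and hence their colour. Only the deleted
  entries can leave the black set: the leaf itself, which occurs only once, and one neighbour
  of the leaf. If that neighbour was black, it equals the leaf's other neighbour, which is kept
  at an odd position: i_{t+1} = i_{t-1} for t < N, and i_{N-1} = i_1 for t = N.\<close>

lemma nth_eq_if_count_list_eq_1: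
  assumes "count_list xs (xs ! k) = 1" and "k < length xs" and "j < length xs"
    and "xs ! j = xs ! k"
  shows "j = k"
proof -
  have "card {j. j < length xs \<and> xs ! j = xs ! k} = 1"
    using assms(1) by (simp add: count_list_eq_length_filter length_filter_conv_card eq_commute)
  then obtain a where a: "{j. j < length xs \<and> xs ! j = xs ! k} = {a}"
    by (rule card_1_singletonE)
  have "j \<in> {a}" "k \<in> {a}"
    using assms(2-4) unfolding a[symmetric] by simp_all
  then show ?thesis
    by simp
qed

lemma nth_take_drop_2:
  assumes "k + 2 \<le> length xs" and "j < length xs - 2"
  shows "(take k xs @ drop (k + 2) xs) ! j = xs ! (if j < k then j else j + 2)"
  using assms by (simp add: nth_append min_def add.commute)

lemma black_take_drop_2:
  assumes "k + 2 \<le> length xs"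
  shows "black (take k xs @ drop (k + 2) xs)
           = {xs ! j | j. j < length xs \<and> even j \<and> j \<noteq> k \<and> j \<noteq> k + 1}"
    (is "_ = ?B")
proof (intro set_eqI iffI)
  fix x assume "x \<in> black (take k xs @ drop (k + 2) xs)"
  then obtain j where "j < length xs - 2" "even j" "x = (take k xs @ drop (k + 2) xs) ! j"
    using assms unfolding black_def by auto
  then show "x \<in> ?B"
    using assms nth_take_drop_2[OF assms] by (auto intro!: exI[of _ "if j < k then j else j + 2"])
next
  fix x assume "x \<in> ?B"
  then obtain j where "j < length xs" "even j" "j \<noteq> k" "j \<noteq> k + 1" "x = xs ! j"
    by blast
  moreover define j' where "j' = (if j < k then j else j - 2)"
  ultimately have "j' < length xs - 2" "even j'" "(if j' < k then j' else j' + 2) = j"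
    using assms by (auto simp: j'_def)
  then show "x \<in> black (take k xs @ drop (k + 2) xs)"
    using assms nth_take_drop_2[OF assms] \<open>x = xs ! j\<close> unfolding black_def by force
qed

lemma black_take:
  "black (take m xs) = {xs ! j | j. j < min m (length xs) \<and> even j}"
  unfolding black_def by (metis (no_types) length_take min.commute nth_take min_less_iff_conj)

lemma black_remove_leaf:
  assumes "balanced_leaf_at xs k"
  shows "black (remove_leaf xs k) = black xs - {xs ! k}"
proof -
  define N where "N = length xs"
  from assms have "2 < N" "k < N" and once: "count_list xs (xs ! k) = 1"
    and twin: "xs ! ((k + N - 1) mod N) = xs ! ((k + 1) mod N)"
    unfolding balanced_leaf_at_def N_def by auto
  have "xs ! j = xs ! k \<longleftrightarrow> j = k" if "j < N" for j
    using nth_eq_if_count_list_eq_1[OF once] that \<open>k < N\<close> unfolding N_def by blast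
  then have black_minus: "black xs - {xs ! k} = {xs ! j | j. j < N \<and> even j \<and> j \<noteq> k}"
    unfolding black_def N_def by auto
  show ?thesis
  proof (cases "k + 1 < N")
    case True
    then have "remove_leaf xs k = take k xs @ drop (k + 2) xs" and "k + 2 \<le> length xs"
      by (simp_all add: remove_leaf_def N_def)
    then have black_rem: "black (remove_leaf xs k)
                            = {xs ! j | j. j < N \<and> even j \<and> j \<noteq> k \<and> j \<noteq> k + 1}"
      by (simp only: black_take_drop_2 N_def)
    have "xs ! (k + 1) \<in> black (remove_leaf xs k)" if "even (k + 1)"
    proof -
      have "0 < k"
        using that by (cases k) auto
      then have "(k + N - 1) mod N = k - 1"
        using \<open>k < N\<close> by (simp add: mod_if)
      then have "xs ! (k + 1) = xs ! (k - 1)"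
        using twin True by simp
      moreover have "k - 1 < N" "even (k - 1)" "k - 1 \<noteq> k" "k - 1 \<noteq> k + 1"
        using that \<open>0 < k\<close> \<open>k < N\<close> by auto
      ultimately show ?thesis
        unfolding black_rem by blast
    qed
    then show ?thesis
      unfolding black_minus black_rem by blast
  next
    case False
    then have "k = N - 1"
      using \<open>k < N\<close> by simp
    have black_rem: "black (remove_leaf xs k) = {xs ! j | j. j < N - 2 \<and> even j}"
      using False by (simp add: remove_leaf_def black_take N_def)
    have "(k + N - 1) mod N = N - 2" "(k + 1) mod N = 0"
      using \<open>k = N - 1\<close> \<open>2 < N\<close> by (simp_all add: mod_if)
    then have "xs ! (N - 2) \<in> black (remove_leaf xs k)"
      using twin \<open>2 < N\<close> unfolding black_rem by force
    show ?thesis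
      unfolding black_minus black_rem
    proof (intro set_eqI iffI)
      fix x assume "x \<in> {xs ! j | j. j < N \<and> even j \<and> j \<noteq> k}"
      then obtain j where "j < N" "even j" "j \<noteq> k" "x = xs ! j"
        by blast
      with \<open>xs ! (N - 2) \<in> black (remove_leaf xs k)\<close> \<open>k = N - 1\<close>
      show "x \<in> {xs ! j | j. j < N - 2 \<and> even j}"
        unfolding black_rem by (cases "j = N - 2") auto
    qed (use \<open>k = N - 1\<close> in auto)
  qed
qed

theorem lemma4p3:
  fixes V :: "nat set" and l :: nat and i :: "nat list" and v k :: nat
  assumes "finite V"
    and "route V (2 * l) i"
    and "balanced_leaf i v"
    and "k < length i" and "i ! k = v"
  shows "black i - {v} = black (remove_leaf i k)"
proof -
  \<comment> \<open>Neither the parity of the length nor the vertex set enters: the identity holds for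
    every sequence with a balanced leaf.\<close>
  obtain k' where "k' < length i" "i ! k' = v" and leaf: "balanced_leaf_at i k'"
    using assms(3) unfolding balanced_leaf_def by blast
  moreover from leaf have "count_list i (i ! k') = 1"
    unfolding balanced_leaf_at_def by simp
  ultimately have "k = k'"
    using nth_eq_if_count_list_eq_1[of i k' k] assms(4,5) by simp
  then show ?thesis
    using black_remove_leaf[OF leaf] assms(5) by simp
qed

end
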